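(* Let $w, w'$ be words over $\Omega$ of lengths $k > k'$. Then $h_w(n) - q^{k-k'} h_{w'}(n-k+k') \le 0$ for all integers $n \le k+1$.
   Context: Let $\Omega$ be a finite alphabet with $q\ge2$ letters; a word of length $k$ is written $w = w_k\dots w_1$. For any integer $n$, $h_w(n)$ is the number of strings of length $n$ over $\Omega$ whose last $k$ characters form $w$ and which contain $w$ as a block of $k$ consecutive characters nowhere else; in particular $h_w(n) = 0$ for all $n < k$ (including negative $n$) and $h_w(k)=1$. *)

theory Defs
  imports Main
begin

text \<open>Strings and words are lists read left to right; the last character of a
  string is its last list element. The word w = w_k ... w_1 is the list [w_k, ..., w_1].\<close>

definition occurs_at :: "'a list \<Rightarrow> 'a list \<Rightarrow> nat \<Rightarrow> bool" where
  "occurs_at w s i \<longleftrightarrow> i + length w \<le> length s \<and> take (length w) (drop i s) = w"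

definition h :: "'a set \<Rightarrow> 'a list \<Rightarrow> int \<Rightarrow> nat" where
  "h \<Omega> w n = (if n < 0 then 0 else
     card {s. set s \<subseteq> \<Omega> \<and> length s = nat n \<and> length w \<le> length s
              \<and> drop (length s - length w) s = w
              \<and> (\<forall>i. occurs_at w s i \<longrightarrow> i = length s - length w)})"

end

theory Submission
  imports Defs
begin

text \<open>Only three values of n matter. For n < k the first term h_w(n) vanishes; for
  n = k both h-values equal 1. For n = k + 1 every string counted by h_w is c w for a
  letter c, so h_w(k+1) \<le> q, whereas c w' is counted by h_w' for every letter c except
  possibly the first letter of w', so h_w'(k'+1) \<ge> q - 1, and q \<le> q^(k-k') (q - 1).\<close>

definition unique_suffix_strings :: "'a set \<Rightarrow> 'a list \<Rightarrow> nat \<Rightarrow> 'a list set" where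
  "unique_suffix_strings \<Omega> w m = {s. set s \<subseteq> \<Omega> \<and> length s = m \<and> length w \<le> length s
     \<and> drop (length s - length w) s = w
     \<and> (\<forall>i. occurs_at w s i \<longrightarrow> i = length s - length w)}"

lemma h_negative: "n < 0 \<Longrightarrow> h \<Omega> w n = 0"
  by (simp add: h_def)

lemma h_of_nat: "h \<Omega> w (int m) = card (unique_suffix_strings \<Omega> w m)"
  by (simp add: h_def unique_suffix_strings_def)

lemma unique_suffix_strings_short:
  "m < length w \<Longrightarrow> unique_suffix_strings \<Omega> w m = {}"
  by (auto simp: unique_suffix_strings_def)

lemma unique_suffix_strings_length:
  "set w \<subseteq> \<Omega> \<Longrightarrow> unique_suffix_strings \<Omega> w (length w) = {w}"
  by (auto simp: unique_suffix_strings_def occurs_at_def)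

lemma h_below_length:
  assumes "n < int (length w)"
  shows "h \<Omega> w n = 0"
proof (cases "n < 0")
  case False
  then have "n = int (nat n)" "nat n < length w" using assms by simp_all
  then show ?thesis
    by (metis h_of_nat unique_suffix_strings_short card.empty)
qed (simp add: h_negative)

lemma h_length: "set w \<subseteq> \<Omega> \<Longrightarrow> h \<Omega> w (int (length w)) = 1"
  by (simp add: h_of_nat unique_suffix_strings_length)

lemma unique_suffix_strings_Suc_length:
  assumes "set w \<subseteq> \<Omega>"
  shows "unique_suffix_strings \<Omega> w (Suc (length w))
           = (\<lambda>c. c # w) ` {c \<in> \<Omega>. \<not> occurs_at w (c # w) 0}"
proof
  show "unique_suffix_strings \<Omega> w (Suc (length w))
          \<subseteq> (\<lambda>c. c # w) ` {c \<in> \<Omega>. \<not> occurs_at w (c # w) 0}"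
  proof
    fix s assume s: "s \<in> unique_suffix_strings \<Omega> w (Suc (length w))"
    then obtain c t where "s = c # t" by (cases s) (auto simp: unique_suffix_strings_def)
    with s have "c \<in> \<Omega>" "t = w" "\<not> occurs_at w (c # w) 0"
      by (auto simp: unique_suffix_strings_def)
    with \<open>s = c # t\<close> show "s \<in> (\<lambda>c. c # w) ` {c \<in> \<Omega>. \<not> occurs_at w (c # w) 0}"
      by blast
  qed
next
  show "(\<lambda>c. c # w) ` {c \<in> \<Omega>. \<not> occurs_at w (c # w) 0}
          \<subseteq> unique_suffix_strings \<Omega> w (Suc (length w))"
  proof
    fix s assume "s \<in> (\<lambda>c. c # w) ` {c \<in> \<Omega>. \<not> occurs_at w (c # w) 0}"
    then obtain c where c: "c \<in> \<Omega>" "\<not> occurs_at w (c # w) 0" "s = c # w" by auto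
    have "i = 1" if "occurs_at w s i" for i
      using that c by (cases i) (auto simp: occurs_at_def)
    with c assms show "s \<in> unique_suffix_strings \<Omega> w (Suc (length w))"
      by (auto simp: unique_suffix_strings_def)
  qed
qed

lemma h_Suc_length:
  "set w \<subseteq> \<Omega> \<Longrightarrow> h \<Omega> w (int (length w) + 1)
     = card ((\<lambda>c. c # w) ` {c \<in> \<Omega>. \<not> occurs_at w (c # w) 0})"
  using h_of_nat[of \<Omega> w "Suc (length w)"] unique_suffix_strings_Suc_length[of w \<Omega>]
  by (simp add: add.commute)

lemma occurs_at_Cons_self_zero:
  assumes "w \<noteq> []" "occurs_at w (c # w) 0"
  shows "c = hd w"
proof -
  have "take (length w) (c # w) = w" using assms(2) by (simp add: occurs_at_def)
  then show ?thesis using assms(1) by (cases w) auto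
qed

lemma h_Suc_length_le:
  assumes "finite \<Omega>" "set w \<subseteq> \<Omega>"
  shows "h \<Omega> w (int (length w) + 1) \<le> card \<Omega>"
proof -
  have "h \<Omega> w (int (length w) + 1)
          = card ((\<lambda>c. c # w) ` {c \<in> \<Omega>. \<not> occurs_at w (c # w) 0})"
    by (rule h_Suc_length[OF assms(2)])
  also have "\<dots> \<le> card {c \<in> \<Omega>. \<not> occurs_at w (c # w) 0}"
    using assms(1) by (intro card_image_le) simp
  also have "\<dots> \<le> card \<Omega>"
    using assms(1) by (intro card_mono) auto
  finally show ?thesis .
qed

lemma h_Suc_length_ge:
  assumes "finite \<Omega>" "set w \<subseteq> \<Omega>" "w \<noteq> []"
  shows "card \<Omega> - 1 \<le> h \<Omega> w (int (length w) + 1)"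
proof -
  have "card \<Omega> - 1 \<le> card (\<Omega> - {hd w})"
    by (simp add: card_Diff_singleton_if)
  also have "\<dots> \<le> card {c \<in> \<Omega>. \<not> occurs_at w (c # w) 0}"
    using assms(1) by (intro card_mono) (auto dest: occurs_at_Cons_self_zero[OF assms(3)])
  also have "\<dots> = card ((\<lambda>c. c # w) ` {c \<in> \<Omega>. \<not> occurs_at w (c # w) 0})"
    by (intro card_image[symmetric]) (auto simp: inj_on_def)
  also have "\<dots> = h \<Omega> w (int (length w) + 1)"
    by (rule h_Suc_length[OF assms(2), symmetric])
  finally show ?thesis .
qed

theorem lemma5p1:
  fixes \<Omega> :: "'a set" and w w' :: "'a list" and n :: int
  assumes "finite \<Omega>" and "card \<Omega> \<ge> 2"
    and "set w \<subseteq> \<Omega>" and "set w' \<subseteq> \<Omega>"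
    and "length w' \<ge> 1" and "length w > length w'"
    and "n \<le> int (length w) + 1"
  shows "int (h \<Omega> w n) - int (card \<Omega>) ^ (length w - length w')
           * int (h \<Omega> w' (n - int (length w) + int (length w'))) \<le> 0"
proof -
  define q where "q = int (card \<Omega>)"
  define d where "d = length w - length w'"
  have "q \<ge> 2" using assms(2) by (simp add: q_def)
  have "q \<le> q ^ d"
    using power_increasing[of 1 d q] \<open>q \<ge> 2\<close> assms(6) by (simp add: d_def)
  consider "n < int (length w)" | "n = int (length w)" | "n = int (length w) + 1"
    using assms(7) by linarith
  then show ?thesis
  proof cases
    case 1
    then show ?thesis by (simp add: h_below_length)
  next
    case 2
    then show ?thesis
      using h_length[OF assms(3)] h_length[OF assms(4)] \<open>q \<le> q ^ d\<close> \<open>q \<ge> 2\<close>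
      by (simp add: q_def d_def)
  next
    case 3
    have "int (h \<Omega> w n) \<le> q"
      using 3 h_Suc_length_le[OF assms(1,3)] by (simp add: q_def)
    also have "\<dots> \<le> q * (q - 1)"
      using \<open>q \<ge> 2\<close> by (simp add: algebra_simps)
    also have "\<dots> \<le> q ^ d * (q - 1)"
      using \<open>q \<le> q ^ d\<close> \<open>q \<ge> 2\<close> by (intro mult_right_mono) simp_all
    also have "\<dots> \<le> q ^ d * int (h \<Omega> w' (int (length w') + 1))"
    proof (rule mult_left_mono)
      have "w' \<noteq> []" using assms(5) by auto
      then show "q - 1 \<le> int (h \<Omega> w' (int (length w') + 1))"
        using h_Suc_length_ge[OF assms(1,4)] assms(2) by (simp add: q_def of_nat_diff)
    qed (use \<open>q \<ge> 2\<close> in simp)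
    finally show ?thesis
      using 3 by (simp add: q_def d_def add.commute)
  qed
qed

end
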